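(* Let $g\ge2$ be an integer and let $k,d_1,d_2,d_3,\ell,m,n$ be positive integers with $1\le d_1,d_2,d_3\le g-1$, $\ell\le m\le n$ and $n\ge 2$, satisfying $$L_k=d_1\frac{g^\ell-1}{g-1}\cdot d_2\frac{g^m-1}{g-1}\cdot d_3\frac{g^n-1}{g-1}.$$ Then $$k<3n\frac{\log g}{\log\alpha}+1<10n\log g,$$ where $\alpha=(1+\sqrt5)/2$.
   Context: $(L_n)_{n\ge 0}$ is the Lucas sequence: $L_0=2$, $L_1=1$, $L_{n+2}=L_{n+1}+L_n$. $\log$ is the natural logarithm. *)

theory Defs
  imports Complex_Main
begin

fun lucas :: "nat \<Rightarrow> nat" where
  "lucas 0 = 2"
| "lucas (Suc 0) = 1"
| "lucas (Suc (Suc n)) = lucas (Suc n) + lucas n"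

end

theory Submission
  imports Defs
begin

text \<open>Since \<open>L\<^sub>k \<ge> \<alpha>\<^sup>k\<^sup>-\<^sup>1\<close> and each factor \<open>d (g\<^sup>r - 1)/(g - 1)\<close> is below \<open>g\<^sup>r \<le> g\<^sup>n\<close>,
  we get \<open>\<alpha>\<^sup>k\<^sup>-\<^sup>1 < g\<^sup>3\<^sup>n\<close>; taking logarithms gives the first inequality.
  The second one only needs \<open>ln \<alpha> \<ge> 1 - 1/\<alpha> = 2 - \<alpha> \<ge> 19/50\<close> and \<open>n ln g \<ge> 1\<close>.\<close>

definition golden_ratio :: real where
  "golden_ratio = (1 + sqrt 5) / 2"

lemma golden_ratio_squared: "golden_ratio ^ 2 = golden_ratio + 1"
  unfolding golden_ratio_def by (simp add: power2_eq_square algebra_simps)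

lemma golden_ratio_gt_1: "1 < golden_ratio"
proof -
  have "1 < sqrt 5" by (rule real_less_rsqrt) simp
  then show ?thesis unfolding golden_ratio_def by simp
qed

lemma lucas_Suc_ge_golden_ratio_power: "golden_ratio ^ n \<le> real (lucas (Suc n))"
proof (induction n rule: lucas.induct)
  case 1
  show ?case by simp
next
  case 2
  have "sqrt 5 \<le> 3" by (rule real_le_lsqrt) auto
  then show ?case by (simp add: golden_ratio_def)
next
  case (3 n)
  have "golden_ratio ^ Suc (Suc n) = golden_ratio ^ n * golden_ratio ^ 2"
    by (simp add: power_add [symmetric])
  also have "\<dots> = golden_ratio ^ Suc n + golden_ratio ^ n"
    by (simp add: golden_ratio_squared algebra_simps)
  also have "\<dots> \<le> real (lucas (Suc (Suc n))) + real (lucas (Suc n))"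
    using "3.IH" by (rule add_mono)
  finally show ?case by simp
qed

lemma ln_ge_1_minus_inverse:
  fixes x :: real
  assumes "0 < x"
  shows "1 - 1 / x \<le> ln x"
  using ln_le_minus_one [of "1 / x"] assms by (simp add: ln_div)

lemma ln_golden_ratio_ge: "19 / 50 \<le> ln golden_ratio"
proof -
  have "1 / golden_ratio = golden_ratio - 1"
    using golden_ratio_squared golden_ratio_gt_1
    by (simp add: field_simps power2_eq_square)
  then have "ln golden_ratio \<ge> 2 - golden_ratio"
    using ln_ge_1_minus_inverse [of golden_ratio] golden_ratio_gt_1 by simp
  moreover have "19 / 50 \<le> 2 - golden_ratio"
  proof -
    have "sqrt 5 \<le> 56 / 25" by (rule real_le_lsqrt) (auto simp: power2_eq_square)
    then show ?thesis unfolding golden_ratio_def by (simp add: field_simps)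
  qed
  ultimately show ?thesis by linarith
qed

lemma ln_ge_half:
  fixes x :: real
  assumes "2 \<le> x"
  shows "1 / 2 \<le> ln x"
proof -
  have "1 / 2 \<le> 1 - 1 / x"
    using assms by (simp add: field_simps)
  also have "\<dots> \<le> ln x"
    using assms by (intro ln_ge_1_minus_inverse) simp
  finally show ?thesis .
qed

lemma div_ln_golden_ratio_plus_1_lt:
  fixes n c :: real
  assumes "2 \<le> n" "1 / 2 \<le> c"
  shows "3 * n * c / ln golden_ratio + 1 < 10 * n * c"
proof -
  have "2 * (1 / 2) \<le> n * c"
    using assms by (intro mult_mono) auto
  moreover have "3 * n * c / ln golden_ratio \<le> 3 * n * c / (19 / 50)"
    using assms ln_golden_ratio_ge by (intro divide_left_mono) auto
  ultimately show ?thesis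
    by simp
qed

lemma repdigit_pos:
  fixes g d :: real
  assumes "1 < g" "0 < d" "0 < r"
  shows "0 < d * (g ^ r - 1) / (g - 1)"
  using assms by (simp add: one_less_power)

lemma repdigit_lt_power:
  fixes g d :: real
  assumes "1 < g" "d \<le> g - 1"
  shows "d * (g ^ r - 1) / (g - 1) < g ^ r"
proof -
  have "d * (g ^ r - 1) \<le> (g - 1) * (g ^ r - 1)"
    using assms by (intro mult_right_mono) (auto simp: one_le_power)
  then have "d * (g ^ r - 1) / (g - 1) \<le> g ^ r - 1"
    using assms by (simp add: divide_le_eq mult.commute)
  then show ?thesis by simp
qed

lemma exponent_lt_of_power_lt:
  fixes a b :: real
  assumes "1 < a" "0 < b" "a ^ j < b ^ N"
  shows "real j < real N * ln b / ln a"
proof -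
  have "real j * ln a < real N * ln b"
    using assms ln_less_cancel_iff [of "a ^ j" "b ^ N"] by (simp add: ln_realpow)
  then show ?thesis
    using assms by (simp add: field_simps)
qed

theorem lemma4p1:
  fixes g k d1 d2 d3 l m n :: nat
  assumes "g \<ge> 2" and "k \<ge> 1" and "l \<ge> 1"
    and "1 \<le> d1" and "d1 \<le> g - 1"
    and "1 \<le> d2" and "d2 \<le> g - 1"
    and "1 \<le> d3" and "d3 \<le> g - 1"
    and "l \<le> m" and "m \<le> n" and "n \<ge> 2"
    and "real (lucas k) = (real d1 * (real g ^ l - 1) / (real g - 1))
                         * (real d2 * (real g ^ m - 1) / (real g - 1))
                         * (real d3 * (real g ^ n - 1) / (real g - 1))"
  shows "real k < 3 * real n * ln (real g) / ln ((1 + sqrt 5) / 2) + 1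
       \<and> 3 * real n * ln (real g) / ln ((1 + sqrt 5) / 2) + 1 < 10 * real n * ln (real g)"
proof -
  obtain j where k: "k = Suc j" using \<open>k \<ge> 1\<close> by (cases k) auto
  have g: "1 < real g" using \<open>g \<ge> 2\<close> by simp
  have "golden_ratio ^ j \<le> real (lucas k)"
    unfolding k by (rule lucas_Suc_ge_golden_ratio_power)
  also have "\<dots> < real g ^ l * real g ^ m * real g ^ n"
  proof -
    have "real d \<le> real g - 1" if "d \<le> g - 1" for d
      using that g by linarith
    then show ?thesis
      unfolding assms(13) using assms g
      by (intro mult_strict_mono repdigit_lt_power repdigit_pos mult_pos_pos) auto
  qed
  also have "\<dots> \<le> real g ^ n * real g ^ n * real g ^ n"
    using assms by (intro mult_mono power_increasing) auto
  also have "\<dots> = real g ^ (3 * n)"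
    by (simp add: power_mult [of _ n 3, unfolded mult.commute [of n]] power3_eq_cube)
  finally have "real j < real (3 * n) * ln (real g) / ln golden_ratio"
    using golden_ratio_gt_1 g by (intro exponent_lt_of_power_lt) auto
  then have "real k < 3 * real n * ln (real g) / ln golden_ratio + 1"
    using k by simp
  moreover have "3 * real n * ln (real g) / ln golden_ratio + 1 < 10 * real n * ln (real g)"
    using \<open>n \<ge> 2\<close> \<open>g \<ge> 2\<close> by (intro div_ln_golden_ratio_plus_1_lt ln_ge_half) auto
  ultimately show ?thesis
    unfolding golden_ratio_def by simp
qed

end
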